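(* Let $l,t$ be non-negative integers and let $A_i,B_i\in\mathbb{C}$ for $i=-l,\dots,t$, with $A_0=1$, $B_0=0$. Consider the operator on $\mathcal{P}$ $$S_{l,t}=\prod_{i=-l}^{0}(A_iI+B_ixD)\,D\,\prod_{i=0}^{t}(A_iI+B_ixD).$$ Then there are constants $a_0,\dots,a_{l+t}\in\mathbb{C}$ such that $$S_{l,t}=\sum_{i=0}^{l+t}a_i(Dx)^iD.$$ Conversely, an operator $\Lambda=\sum_{i=0}^{k}a_i(Dx)^iD=\sum_{i=0}^{k}a_iD(xD)^i$ can be written in the form $$\Lambda=S_{0,k}=D\prod_{i=1}^{k}(A_iI+B_ixD),$$ where the coefficients $A_i,B_i$ are obtained from the factorization $\prod_{i=1}^{k}(A_i+B_ix)=\sum_{i=0}^{k}a_ix^i$ of the polynomial $f(x)=\sum_{i=0}^ka_ix^i$.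
   Context: $\mathcal{P}$ is the space of complex polynomials in $x$; $I$ is the identity operator, $D$ the derivative, $x$ multiplication by $x$, and products of operators are compositions. *)

theory Defs
  imports "HOL-Computational_Algebra.Polynomial"
begin

text \<open>Operators on the space of complex polynomials are functions
  complex poly => complex poly; products of operators are compositions.\<close>

definition Dop :: "complex poly \<Rightarrow> complex poly" where
  "Dop p = pderiv p"

definition Xop :: "complex poly \<Rightarrow> complex poly" where
  "Xop p = [:0, 1:] * p"

definition Iop :: "complex poly \<Rightarrow> complex poly" where
  "Iop p = p"

definition opprod :: "(int \<Rightarrow> ('a \<Rightarrow> 'a)) \<Rightarrow> int \<Rightarrow> int \<Rightarrow> ('a \<Rightarrow> 'a)" where
  "opprod F m n = foldr (\<circ>) (map F [m..n]) id"

definition factorop :: "(int \<Rightarrow> complex) \<Rightarrow> (int \<Rightarrow> complex) \<Rightarrow> int \<Rightarrow> complex poly \<Rightarrow> complex poly" where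
  "factorop A B i p = smult (A i) (Iop p) + smult (B i) (Xop (Dop p))"

definition Slt :: "nat \<Rightarrow> nat \<Rightarrow> (int \<Rightarrow> complex) \<Rightarrow> (int \<Rightarrow> complex) \<Rightarrow> complex poly \<Rightarrow> complex poly" where
  "Slt l t A B = opprod (factorop A B) (- int l) 0 \<circ> Dop \<circ> opprod (factorop A B) 0 (int t)"

end

theory Submission
  imports Defs "HOL-Computational_Algebra.Fundamental_Theorem_Algebra"
begin

text \<open>All operators involved act diagonally on monomials, up to the index shift of D:
  x D and D x multiply x^n by n and n + 1, and A I + B x D by A + B n. Hence
  \<open>\<Sum> a\<^sub>i (Dx)\<^sup>i D\<close> sends the coefficient of x^(n+1) to (n+1) f(n+1) times the
  coefficient of x^n, where f = \<open>\<Sum> a\<^sub>i x\<^sup>i\<close>, and any operator with this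
  behaviour equals it. For S_{l,t}, the factors to the left of D are evaluated at n = (n+1) - 1,
  which turns them into the linear polynomials [:A i - B i, B i:] in n + 1, so the symbol
  polynomial has degree at most l + t. Conversely, by the fundamental theorem of algebra f
  splits into k linear factors, whose product is the symbol of D followed by the factors.\<close>

lemma coeff_Dop: "coeff (Dop p) n = (of_nat n + 1) * coeff p (Suc n)"
  by (simp add: Dop_def coeff_pderiv add.commute)

lemma coeff_Xop_Suc: "coeff (Xop p) (Suc n) = coeff p n"
  by (simp add: Xop_def mult_pCons_left)

lemma coeff_Xop_Dop: "coeff (Xop (Dop p)) n = of_nat n * coeff p n"
  by (cases n) (auto simp: Xop_def Dop_def coeff_pderiv coeff_pCons_0 mult_pCons_left)

lemma coeff_Dop_Xop_power: "coeff (((Dop \<circ> Xop) ^^ i) p) n = (of_nat n + 1) ^ i * coeff p n"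
  by (induction i arbitrary: p) (auto simp: coeff_Dop coeff_Xop_Suc)

lemma coeff_Xop_Dop_power: "coeff (((Xop \<circ> Dop) ^^ i) p) n = of_nat n ^ i * coeff p n"
  by (induction i arbitrary: p) (auto simp: coeff_Xop_Dop)

lemma coeff_factorop: "coeff (factorop A B i p) n = (A i + B i * of_nat n) * coeff p n"
  by (simp add: factorop_def Iop_def coeff_Xop_Dop algebra_simps)

lemma coeff_opprod_factorop:
  "coeff (opprod (factorop A B) m m' p) n = (\<Prod>i\<in>{m..m'}. A i + B i * of_nat n) * coeff p n"
proof -
  have "coeff (foldr (\<circ>) (map (factorop A B) is) id p) n
      = (\<Prod>i\<leftarrow>is. A i + B i * of_nat n) * coeff p n" for "is"
    by (induction "is") (auto simp: coeff_factorop)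
  moreover have "(\<Prod>i\<in>{m..m'}. A i + B i * of_nat n) = (\<Prod>i\<leftarrow>[m..m']. A i + B i * of_nat n)"
    using prod.distinct_set_conv_list[OF distinct_upto, of _ m m'] by simp
  ultimately show ?thesis
    by (simp add: opprod_def)
qed

lemma coeff_sum_Dop_Xop_power_Dop:
  "coeff (\<Sum>i\<le>k. smult (a i) (((Dop \<circ> Xop) ^^ i \<circ> Dop) p)) n
     = poly (\<Sum>i\<le>k. monom (a i) i) (of_nat n + 1) * (of_nat n + 1) * coeff p (Suc n)"
  by (simp add: coeff_sum coeff_Dop_Xop_power coeff_Dop poly_sum poly_monom sum_distrib_right,
      rule sum.cong, auto simp: algebra_simps)

lemma coeff_sum_Dop_Xop_Dop_power:
  "coeff (\<Sum>i\<le>k. smult (a i) ((Dop \<circ> (Xop \<circ> Dop) ^^ i) p)) n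
     = poly (\<Sum>i\<le>k. monom (a i) i) (of_nat n + 1) * (of_nat n + 1) * coeff p (Suc n)"
  by (simp add: coeff_sum coeff_Xop_Dop_power coeff_Dop poly_sum poly_monom sum_distrib_right,
      rule sum.cong, auto simp: algebra_simps)

lemma sum_Dop_Xop_power_Dop_eqI:
  assumes "\<And>p n. coeff (S p) n
             = poly (\<Sum>i\<le>k. monom (a i) i) (of_nat n + 1) * (of_nat n + 1) * coeff p (Suc n)"
  shows "(\<lambda>p. \<Sum>i\<le>k. smult (a i) (((Dop \<circ> Xop) ^^ i \<circ> Dop) p)) = S"
  by (intro ext poly_eqI) (simp only: assms coeff_sum_Dop_Xop_power_Dop)

lemma degree_prod_linear_le:
  fixes A B :: "'i \<Rightarrow> 'a::comm_semiring_1"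
  assumes "finite I"
  shows "degree (\<Prod>i\<in>I. [:A i, B i:]) \<le> card I"
proof -
  have "degree (\<Prod>i\<in>I. [:A i, B i:]) \<le> (\<Sum>i\<in>I. degree [:A i, B i:])"
    using degree_prod_sum_le[OF assms, of "\<lambda>i. [:A i, B i:]"] by (simp add: o_def)
  also have "\<dots> \<le> (\<Sum>i\<in>I. 1)"
    by (intro sum_mono) (simp add: degree_pCons_le)
  finally show ?thesis by simp
qed

lemma prod_atLeastAtMost_remove_unit:
  fixes f :: "int \<Rightarrow> 'a::comm_monoid_mult"
  assumes "f j = 1"
  shows "(\<Prod>i\<in>{m..n}. f i) = (\<Prod>i\<in>{m..n} - {j}. f i)"
  using assms by (cases "j \<in> {m..n}") (simp_all add: prod.remove)

lemma coeff_Slt: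
  assumes "A 0 = 1" "B 0 = 0"
  shows "coeff (Slt l t A B p) n
    = poly ((\<Prod>i\<in>{- int l..-1}. [:A i - B i, B i:]) * (\<Prod>i\<in>{1..int t}. [:A i, B i:]))
        (of_nat n + 1) * (of_nat n + 1) * coeff p (Suc n)"
proof -
  have shift: "poly [:a - b, b:] (x + 1) = a + b * x" for a b x :: complex
    by (simp add: algebra_simps)
  have "(\<Prod>i\<in>{- int l..0}. A i + B i * of_nat n) = (\<Prod>i\<in>{- int l..0} - {0}. A i + B i * of_nat n)"
    using assms by (intro prod_atLeastAtMost_remove_unit) simp
  also have "{- int l..0} - {0} = {- int l..-1}" by auto
  finally have left: "(\<Prod>i\<in>{- int l..0}. A i + B i * of_nat n)
      = poly (\<Prod>i\<in>{- int l..-1}. [:A i - B i, B i:]) (of_nat n + 1)"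
    by (simp only: poly_prod shift)
  have "(\<Prod>i\<in>{0..int t}. A i + B i * (of_nat n + 1))
      = (\<Prod>i\<in>{0..int t} - {0}. A i + B i * (of_nat n + 1))"
    using assms by (intro prod_atLeastAtMost_remove_unit) simp
  also have "{0..int t} - {0} = {1..int t}" by auto
  finally have right: "(\<Prod>i\<in>{0..int t}. A i + B i * (of_nat n + 1))
      = poly (\<Prod>i\<in>{1..int t}. [:A i, B i:]) (of_nat n + 1)"
    by (simp add: poly_prod mult.commute)
  show ?thesis
    by (simp add: Slt_def coeff_opprod_factorop coeff_Dop left right[unfolded add.commute[of _ 1]]
        add.commute[of _ 1])
qed

lemma linear_factorization_exists:
  fixes f :: "complex poly"
  assumes "k \<ge> 1" "degree f \<le> k"
  shows "\<exists>A B :: int \<Rightarrow> complex. (\<Prod>i\<in>{1..int k}. [:A i, B i:]) = f"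
  using assms
proof (induction k arbitrary: f rule: dec_induct)
  case base
  then have "f = [:coeff f 0, coeff f 1:]"
    by (intro poly_eqI) (auto simp: coeff_eq_0 coeff_pCons split: nat.split)
  then show ?case
    by (intro exI[of _ "\<lambda>_. coeff f 0"] exI[of _ "\<lambda>_. coeff f 1"]) simp
next
  case (step k)
  have split_last: "{1..int (Suc k)} = insert (int k + 1) {1..int k}" by auto
  have extend: "\<exists>A B. (\<Prod>i\<in>{1..int (Suc k)}. [:A i, B i:]) = [:c, d:] * g"
    if "degree g \<le> k" for c d and g :: "complex poly"
  proof -
    obtain A B where AB: "(\<Prod>i\<in>{1..int k}. [:A i, B i:]) = g"
      using step.IH \<open>degree g \<le> k\<close> by blast
    define A' where "A' = A(int k + 1 := c)"
    define B' where "B' = B(int k + 1 := d)"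
    have "(\<Prod>i\<in>{1..int k}. [:A' i, B' i:]) = g"
      using AB by (intro trans[OF prod.cong AB]) (auto simp: A'_def B'_def)
    then have "(\<Prod>i\<in>{1..int (Suc k)}. [:A' i, B' i:]) = [:c, d:] * g"
      unfolding split_last by (simp add: A'_def B'_def)
    then show ?thesis by blast
  qed
  show ?case
  proof (cases "degree f \<le> k")
    case True
    then show ?thesis using extend[of f 1 0] by simp
  next
    case False
    then have degree_f: "degree f = Suc k" using step.prems by simp
    then obtain z where "poly f z = 0"
      using fundamental_theorem_of_algebra by (metis constant_degree nat.distinct(1))
    then obtain g where g: "f = [:-z, 1:] * g"
      using poly_eq_0_iff_dvd by blast
    with degree_f have "g \<noteq> 0" by auto
    then have "degree ([:-z, 1:] * g) = Suc (degree g)"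
      by (subst degree_mult_eq) auto
    with degree_f g have "degree g = k"
      by simp
    then show ?thesis using extend[of g "-z" 1] g by simp
  qed
qed

lemma degree_sum_monom_le: "degree (\<Sum>i\<le>k. monom (a i) i) \<le> k"
  by (intro degree_sum_le) (auto intro: order.trans[OF degree_monom_le])

lemma Slt_eq_sum_Dop_Xop_power_Dop:
  fixes l t :: nat
  assumes "A 0 = 1" "B 0 = 0"
  defines "Q \<equiv> (\<Prod>i\<in>{- int l..-1}. [:A i - B i, B i:]) * (\<Prod>i\<in>{1..int t}. [:A i, B i:])"
  shows "Slt l t A B = (\<lambda>p. \<Sum>i\<le>l + t. smult (coeff Q i) (((Dop \<circ> Xop) ^^ i \<circ> Dop) p))"
proof -
  have "degree (\<Prod>i\<in>{- int l..-1}. [:A i - B i, B i:]) \<le> l"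
    using degree_prod_linear_le[of "{- int l..-1}"] by simp
  moreover have "degree (\<Prod>i\<in>{1..int t}. [:A i, B i:]) \<le> t"
    using degree_prod_linear_le[of "{1..int t}"] by simp
  ultimately have "degree Q \<le> l + t"
    unfolding Q_def by (intro order.trans[OF degree_mult_le]) simp
  then have "(\<Sum>i\<le>l + t. monom (coeff Q i) i) = Q"
    by (rule poly_as_sum_of_monoms')
  then show ?thesis
    using coeff_Slt[where A = A and B = B, OF assms(1,2)]
    by (intro sum_Dop_Xop_power_Dop_eqI[symmetric]) (simp add: Q_def)
qed

lemma sum_Dop_Xop_power_Dop_eq_factorization:
  assumes "(\<Prod>i\<in>{1..int k}. [:A i, B i:]) = (\<Sum>i\<le>k. monom (a i) i)"
  shows "(\<lambda>p. \<Sum>i\<le>k. smult (a i) (((Dop \<circ> Xop) ^^ i \<circ> Dop) p))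
          = Dop \<circ> opprod (factorop A B) 1 (int k)"
  by (rule sum_Dop_Xop_power_Dop_eqI)
    (simp add: coeff_Dop coeff_opprod_factorop poly_prod algebra_simps flip: assms)

theorem proposition3:
  shows "(\<forall>(l::nat) (t::nat) (A::int \<Rightarrow> complex) (B::int \<Rightarrow> complex).
            A 0 = 1 \<and> B 0 = 0 \<longrightarrow>
            (\<exists>a::nat \<Rightarrow> complex.
               Slt l t A B = (\<lambda>p. \<Sum>i\<le>l+t. smult (a i) (((Dop \<circ> Xop) ^^ i \<circ> Dop) p))))
       \<and> (\<forall>(k::nat) (a::nat \<Rightarrow> complex). k \<ge> 1 \<longrightarrow>
            (\<lambda>p. \<Sum>i\<le>k. smult (a i) (((Dop \<circ> Xop) ^^ i \<circ> Dop) p))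
              = (\<lambda>p. \<Sum>i\<le>k. smult (a i) ((Dop \<circ> (Xop \<circ> Dop) ^^ i) p))
            \<and> (\<exists>(A::int \<Rightarrow> complex) (B::int \<Rightarrow> complex).
                 (\<Prod>i\<in>{1..int k}. [:A i, B i:]) = (\<Sum>i\<le>k. monom (a i) i))
            \<and> (\<forall>(A::int \<Rightarrow> complex) (B::int \<Rightarrow> complex).
                 (\<Prod>i\<in>{1..int k}. [:A i, B i:]) = (\<Sum>i\<le>k. monom (a i) i) \<longrightarrow>
                 (\<lambda>p. \<Sum>i\<le>k. smult (a i) (((Dop \<circ> Xop) ^^ i \<circ> Dop) p))
                   = Dop \<circ> opprod (factorop A B) 1 (int k)))"
proof (intro conjI allI impI)
  fix l t :: nat and A B :: "int \<Rightarrow> complex"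
  assume "A 0 = 1 \<and> B 0 = 0"
  then show "\<exists>a. Slt l t A B = (\<lambda>p. \<Sum>i\<le>l+t. smult (a i) (((Dop \<circ> Xop) ^^ i \<circ> Dop) p))"
    using Slt_eq_sum_Dop_Xop_power_Dop by blast
next
  fix k :: nat and a :: "nat \<Rightarrow> complex"
  assume "1 \<le> k"
  show "(\<lambda>p. \<Sum>i\<le>k. smult (a i) (((Dop \<circ> Xop) ^^ i \<circ> Dop) p))
          = (\<lambda>p. \<Sum>i\<le>k. smult (a i) ((Dop \<circ> (Xop \<circ> Dop) ^^ i) p))"
    by (rule sum_Dop_Xop_power_Dop_eqI) (rule coeff_sum_Dop_Xop_Dop_power)
  show "\<exists>A B. (\<Prod>i\<in>{1..int k}. [:A i, B i:]) = (\<Sum>i\<le>k. monom (a i) i)"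
    using linear_factorization_exists[OF \<open>1 \<le> k\<close> degree_sum_monom_le] .
qed (rule sum_Dop_Xop_power_Dop_eq_factorization)

end
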